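(* Consider a constrained online convex optimization problem: $\mathcal{F}\subset\mathbb{R}^d$ is a convex set with bounded $\ell_\infty$-diameter $D_\infty=\max_{\boldsymbol{x},\boldsymbol{y}\in\mathcal{F}}\Vert\boldsymbol{x}-\boldsymbol{y}\Vert_\infty$, and $f_1,\dots,f_T$ are convex loss functions with $\Vert\nabla f_t(\boldsymbol{\theta})\Vert_\infty\le G_\infty$ for all $t\in[T]$ and $\boldsymbol{\theta}\in\mathcal{F}$. Let the iterates $\boldsymbol{\theta}_t\in\mathcal{F}$ be generated by AdaSGDMax with step size $\eta_t=\eta/\sqrt{t\hat v_t/d}$ for some $\eta>0$, and assume $\hat v_1>0$. Then the regret $R_T:=\sum_{t=1}^T f_t(\boldsymbol{\theta}_t)-\min_{\boldsymbol{\theta}^*\in\mathcal{F}}\sum_{t=1}^T f_t(\boldsymbol{\theta}^* )$ satisfies $$R_T\le \frac{D_\infty^2\sqrt{d\hat v_T T}}{2\eta}+\frac{d^{3/2}G_\infty^2\eta(2\sqrt{T}-1)}{2\sqrt{\hat v_1}}.$$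
   Context: AdaSGDMax in the online setting: with $\boldsymbol{g}_t=\nabla f_t(\boldsymbol{\theta}_t)$, $v_0=0$, $\hat v_0=0$ and a fixed $\beta_2\in[0,1)$, set $v_t=\beta_2 v_{t-1}+(1-\beta_2)\Vert\boldsymbol{g}_t\Vert_2^2$, $\hat v_t=\max\{\hat v_{t-1},v_t\}$, and $\boldsymbol{\theta}_{t+1}=\Pi_{\mathcal{F}}(\boldsymbol{\theta}_t-\eta_t\boldsymbol{g}_t)$, where $\Pi_{\mathcal{F}}(\boldsymbol{x})=\arg\min_{\boldsymbol{y}\in\mathcal{F}}\Vert\boldsymbol{x}-\boldsymbol{y}\Vert_2$ is Euclidean projection and $\boldsymbol{\theta}_1\in\mathcal{F}$. *)

theory Defs
  imports "HOL-Analysis.Analysis"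
begin

definition proj_set :: "('a::real_normed_vector) set \<Rightarrow> 'a \<Rightarrow> 'a" where
  "proj_set F x = (SOME y. y \<in> F \<and> (\<forall>z\<in>F. dist x y \<le> dist x z))"

text \<open>AdaSGDMax state.  adasgdmax_state ... t = (theta_(t+1), v_t, hat v_t),
  with the gradient oracle grad t theta = nabla f_t(theta), theta_1 = th1,
  v_0 = 0, hat v_0 = 0, step size eta_t = eta / sqrt(t * hat v_t / d).\<close>
fun adasgdmax_state ::
  "(real^'d) set \<Rightarrow> (nat \<Rightarrow> real^'d \<Rightarrow> real^'d) \<Rightarrow> real \<Rightarrow> real \<Rightarrow> real^'d
   \<Rightarrow> nat \<Rightarrow> (real^'d) \<times> real \<times> real" where
  "adasgdmax_state F grad \<beta>2 \<eta> th1 0 = (th1, 0, 0)"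
| "adasgdmax_state F grad \<beta>2 \<eta> th1 (Suc t) =
     (let (th, v, hv) = adasgdmax_state F grad \<beta>2 \<eta> th1 t;
          g = grad (Suc t) th;
          v' = \<beta>2 * v + (1 - \<beta>2) * (norm g)\<^sup>2;
          hv' = max hv v';
          eta_t = \<eta> / sqrt (real (Suc t) * hv' / real CARD('d))
      in (proj_set F (th - eta_t *\<^sub>R g), v', hv'))"

definition ada_theta where
  "ada_theta F grad \<beta>2 \<eta> th1 t = fst (adasgdmax_state F grad \<beta>2 \<eta> th1 (t - 1))"

definition ada_vhat where
  "ada_vhat F grad \<beta>2 \<eta> th1 t = snd (snd (adasgdmax_state F grad \<beta>2 \<eta> th1 t))"

definition linf_diam :: "(real^'d) set \<Rightarrow> real" where
  "linf_diam F = (SUP p\<in>F \<times> F. infnorm (fst p - snd p))"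

end

theory Submission
  imports Defs
begin

(* AdaSGDMax is projected online gradient descent with step sizes eta_t = eta / sqrt (t hat v_t / d),
   which are nonincreasing because hat v_t is, so Zinkevich's analysis applies.  Against a
   comparator u, convexity bounds the regret by the linearised regret sum_t g_t . (theta_t - u).
   Since the projection is nonexpansive, each term is at most
   (|theta_t - u|^2 - |theta_(t+1) - u|^2) / (2 eta_t) + eta_t |g_t|^2 / 2, and as the weights
   1 / (2 eta_t) are nondecreasing these differences telescope against |theta_t - u|^2 <= d D_inf^2.
   The remaining gradient term is controlled by hat v_t >= hat v_1, |g_t|^2 <= d G_inf^2 and
   sum_t 1 / sqrt t <= 2 sqrt T - 1. *)

lemma convex_on_gradient_inequality:
  fixes f :: "'a::real_inner \<Rightarrow> real"
  assumes convex: "convex_on F f" and "x \<in> F" "y \<in> F"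
    and deriv: "(f has_derivative (\<lambda>h. g \<bullet> h)) (at x)"
  shows "f x + g \<bullet> (y - x) \<le> f y"
proof -
  define \<phi> where "\<phi> s = f (x + s *\<^sub>R (y - x))" for s :: real
  have "((\<lambda>s. x + s *\<^sub>R (y - x)) has_derivative (\<lambda>s. s *\<^sub>R (y - x))) (at 0)"
    by (auto intro!: derivative_eq_intros)
  moreover have "(f has_derivative (\<lambda>h. g \<bullet> h)) (at ((\<lambda>s. x + s *\<^sub>R (y - x)) 0))"
    using deriv by simp
  ultimately have "(\<phi> has_derivative (\<lambda>s. g \<bullet> (s *\<^sub>R (y - x)))) (at 0)"
    unfolding \<phi>_def by (rule has_derivative_compose)
  then have "(\<phi> has_real_derivative g \<bullet> (y - x)) (at 0)"
    unfolding has_field_derivative_def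
    by (rule has_derivative_eq_rhs) (simp add: fun_eq_iff inner_scaleR_right)
  then have "((\<lambda>s. (\<phi> s - \<phi> 0) / s) \<longlongrightarrow> g \<bullet> (y - x)) (at_right 0)"
    by (simp add: DERIV_def filterlim_at_split)
  moreover have "eventually (\<lambda>s. (\<phi> s - \<phi> 0) / s \<le> f y - f x) (at_right 0)"
    using eventually_at_right_real[OF zero_less_one]
  proof eventually_elim
    case (elim s)
    have "x + s *\<^sub>R (y - x) = (1 - s) *\<^sub>R x + s *\<^sub>R y" by (simp add: algebra_simps)
    then have "\<phi> s \<le> (1 - s) * f x + s * f y"
      using convex_onD[OF convex, of s x y] elim \<open>x \<in> F\<close> \<open>y \<in> F\<close> by (simp add: \<phi>_def)
    then show ?case using elim by (simp add: \<phi>_def divide_simps algebra_simps)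
  qed
  ultimately have "g \<bullet> (y - x) \<le> f y - f x"
    by (rule tendsto_upperbound) simp
  then show ?thesis by simp
qed

lemma sum_inverse_sqrt_le: "n \<ge> 1 \<Longrightarrow> (\<Sum>t=1..n. 1 / sqrt (real t)) \<le> 2 * sqrt (real n) - 1"
proof (induction n rule: dec_induct)
  case base then show ?case by simp
next
  case (step n)
  let ?s = "sqrt (real n)" and ?u = "sqrt (real (Suc n))"
  have "2 * ?u^2 - 2 * ?u * ?s = (?u - ?s)^2 + 1"
    by (simp add: power2_eq_square algebra_simps)
  then have "1 \<le> 2 * ?u^2 - 2 * ?u * ?s"
    by simp
  then have "1 / ?u \<le> 2 * (?u - ?s)"
    by (simp add: divide_simps power2_eq_square algebra_simps del: real_sqrt_mult_self of_nat_Suc)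
  then show ?case using step.IH by simp
qed

lemma sum_weighted_telescope_le:
  fixes c a :: "nat \<Rightarrow> real"
  assumes "n \<ge> 1"
    and c_mono: "\<And>t. t \<in> {1..<n} \<Longrightarrow> c t \<le> c (Suc t)" and "c 1 \<ge> 0"
    and a_le: "\<And>t. t \<in> {1..n} \<Longrightarrow> a t \<le> D"
  shows "(\<Sum>t=1..n. c t * (a t - a (Suc t))) \<le> c n * (D - a (Suc n))"
  using \<open>n \<ge> 1\<close>
proof (induction n rule: dec_induct)
  case base then show ?case
    using a_le[of 1] \<open>c 1 \<ge> 0\<close> assms(1) by (simp add: mult_left_mono)
next
  case (step m)
  have "c m * (D - a (Suc m)) \<le> c (Suc m) * (D - a (Suc m))"
    using c_mono[of m] a_le[of "Suc m"] step.hyps by (intro mult_right_mono) auto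
  then show ?case using step.IH by (simp add: algebra_simps)
qed

lemma proj_set_eq_closest_point: "proj_set = closest_point"
  by (auto simp: proj_set_def closest_point_def fun_eq_iff)

lemma closest_point_gradient_step:
  fixes x z g :: "'a::{real_inner,heine_borel}"
  assumes "convex F" "closed F" "z \<in> F" "\<eta> > 0"
  shows "g \<bullet> (x - z)
    \<le> ((norm (x - z))\<^sup>2 - (norm (closest_point F (x - \<eta> *\<^sub>R g) - z))\<^sup>2) / (2 * \<eta>)
      + \<eta> * (norm g)\<^sup>2 / 2"
proof -
  have "norm (closest_point F (x - \<eta> *\<^sub>R g) - z) \<le> norm ((x - z) - \<eta> *\<^sub>R g)"
    using closest_point_lipschitz[OF assms(1,2), of "x - \<eta> *\<^sub>R g" z]
      closest_point_self[OF \<open>z \<in> F\<close>] \<open>z \<in> F\<close>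
    by (auto simp: dist_norm algebra_simps)
  then have "(norm (closest_point F (x - \<eta> *\<^sub>R g) - z))\<^sup>2 \<le> (norm ((x - z) - \<eta> *\<^sub>R g))\<^sup>2"
    by (simp add: power_mono)
  also have "\<dots> = (norm (x - z))\<^sup>2 - 2 * \<eta> * (g \<bullet> (x - z)) + \<eta>\<^sup>2 * (norm g)\<^sup>2"
    unfolding power2_norm_eq_inner by (simp add: inner_diff_left inner_diff_right inner_commute
        algebra_simps power2_eq_square)
  finally show ?thesis
    using \<open>\<eta> > 0\<close> by (simp add: field_simps power2_eq_square)
qed

lemma projected_gradient_linearized_regret:
  fixes x g :: "nat \<Rightarrow> 'a::{real_inner,heine_borel}" and \<eta> :: "nat \<Rightarrow> real"
  assumes "convex F" "closed F" "z \<in> F" "T \<ge> 1"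
    and step: "\<And>t. t \<in> {1..T} \<Longrightarrow> x (Suc t) = closest_point F (x t - \<eta> t *\<^sub>R g t)"
    and \<eta>_pos: "\<And>t. t \<in> {1..T} \<Longrightarrow> \<eta> t > 0"
    and \<eta>_antimono: "\<And>t. t \<in> {1..<T} \<Longrightarrow> \<eta> (Suc t) \<le> \<eta> t"
    and radius: "\<And>t. t \<in> {1..T} \<Longrightarrow> (norm (x t - z))\<^sup>2 \<le> R"
  shows "(\<Sum>t=1..T. g t \<bullet> (x t - z)) \<le> R / (2 * \<eta> T) + (\<Sum>t=1..T. \<eta> t * (norm (g t))\<^sup>2 / 2)"
proof -
  define a where "a t = (norm (x t - z))\<^sup>2" for t
  define c where "c t = 1 / (2 * \<eta> t)" for t
  have "(\<Sum>t=1..T. g t \<bullet> (x t - z))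
      \<le> (\<Sum>t=1..T. c t * (a t - a (Suc t)) + \<eta> t * (norm (g t))\<^sup>2 / 2)"
    using closest_point_gradient_step[OF assms(1-3) \<eta>_pos]
    by (intro sum_mono) (simp add: a_def c_def step)
  also have "\<dots> = (\<Sum>t=1..T. c t * (a t - a (Suc t))) + (\<Sum>t=1..T. \<eta> t * (norm (g t))\<^sup>2 / 2)"
    by (simp add: sum.distrib)
  also have "(\<Sum>t=1..T. c t * (a t - a (Suc t))) \<le> c T * (R - a (Suc T))"
  proof (rule sum_weighted_telescope_le[OF \<open>T \<ge> 1\<close>])
    show "c t \<le> c (Suc t)" if "t \<in> {1..<T}" for t
      using \<eta>_antimono[OF that] \<eta>_pos[of t] \<eta>_pos[of "Suc t"] that
      by (auto simp: c_def intro!: divide_left_mono)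
    show "c 1 \<ge> 0"
      using \<eta>_pos[of 1] \<open>T \<ge> 1\<close> by (simp add: c_def)
    show "a t \<le> R" if "t \<in> {1..T}" for t
      using radius[OF that] by (simp add: a_def)
  qed
  also have "c T * (R - a (Suc T)) \<le> R / (2 * \<eta> T)"
    using \<eta>_pos[of T] \<open>T \<ge> 1\<close> by (simp add: a_def c_def divide_right_mono)
  finally show ?thesis by simp
qed

lemma norm_power2_le_DIM_infnorm:
  fixes x :: "'a::euclidean_space"
  shows "(norm x)\<^sup>2 \<le> DIM('a) * (infnorm x)\<^sup>2"
proof -
  have "(norm x)\<^sup>2 \<le> (sqrt DIM('a) * infnorm x)\<^sup>2"
    using norm_le_infnorm[of x] by (simp add: power_mono)
  then show ?thesis by (simp add: power_mult_distrib)
qed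

lemma infnorm_diff_le_linf_diam:
  assumes "bounded F" "x \<in> F" "y \<in> F"
  shows "infnorm (x - y) \<le> linf_diam F"
proof -
  obtain B where B: "\<And>x. x \<in> F \<Longrightarrow> norm x \<le> B"
    using \<open>bounded F\<close> bounded_iff by blast
  have "infnorm (fst p - snd p) \<le> 2 * B" if "p \<in> F \<times> F" for p
    using infnorm_le_norm[of "fst p - snd p"] norm_triangle_ineq4[of "fst p" "snd p"]
      B[of "fst p"] B[of "snd p"] that
    by auto
  then have bdd: "bdd_above ((\<lambda>p. infnorm (fst p - snd p)) ` (F \<times> F))"
    by (intro bdd_aboveI2[where M = "2 * B"]) auto
  show ?thesis
    unfolding linf_diam_def using cSUP_upper[OF _ bdd, of "(x, y)"] assms(2,3) by simp
qed

locale adasgdmax =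
  fixes F :: "(real^'d) set" and grad :: "nat \<Rightarrow> real^'d \<Rightarrow> real^'d"
    and \<beta>2 \<eta> :: real and th1 :: "real^'d"
  assumes convex_F: "convex F" and closed_F: "closed F" and th1_in_F: "th1 \<in> F"
    and eta_pos: "\<eta> > 0" and vhat_1_pos: "ada_vhat F grad \<beta>2 \<eta> th1 1 > 0"
begin

abbreviation \<theta> :: "nat \<Rightarrow> real^'d" where "\<theta> \<equiv> ada_theta F grad \<beta>2 \<eta> th1"
abbreviation vhat :: "nat \<Rightarrow> real" where "vhat \<equiv> ada_vhat F grad \<beta>2 \<eta> th1"

definition step_size :: "nat \<Rightarrow> real" where
  "step_size t = \<eta> / sqrt (real t * vhat t / real CARD('d))"

lemma theta_Suc:
  assumes "t \<ge> 1"
  shows "\<theta> (Suc t) = proj_set F (\<theta> t - step_size t *\<^sub>R grad t (\<theta> t))"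
proof -
  obtain k where "t = Suc k" using assms by (cases t) auto
  then show ?thesis
    by (cases "adasgdmax_state F grad \<beta>2 \<eta> th1 k")
       (simp add: ada_theta_def ada_vhat_def step_size_def Let_def)
qed

lemma theta_in_F: "\<theta> t \<in> F"
proof (induction t)
  case (Suc t)
  show ?case
  proof (cases "t = 0")
    case False
    then show ?thesis
      using theta_Suc[of t] closest_point_in_set[OF closed_F] th1_in_F
      by (auto simp: proj_set_eq_closest_point)
  qed (simp add: ada_theta_def th1_in_F)
qed (simp add: ada_theta_def th1_in_F)

lemma vhat_mono: "s \<le> t \<Longrightarrow> vhat s \<le> vhat t"
proof (induction t rule: dec_induct)
  case (step t)
  then show ?case
    by (cases "adasgdmax_state F grad \<beta>2 \<eta> th1 t") (auto simp: ada_vhat_def Let_def)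
qed simp

lemma vhat_pos: "t \<ge> 1 \<Longrightarrow> vhat t > 0"
  using vhat_mono[of 1 t] vhat_1_pos by simp

lemma step_size_eq:
  "t \<ge> 1 \<Longrightarrow> step_size t = \<eta> * sqrt (real CARD('d)) / (sqrt (real t) * sqrt (vhat t))"
  using vhat_pos[of t] by (simp add: step_size_def real_sqrt_divide real_sqrt_mult)

lemma step_size_pos: "t \<ge> 1 \<Longrightarrow> step_size t > 0"
  using vhat_pos[of t] eta_pos by (simp add: step_size_eq)

lemma step_size_antimono: "t \<ge> 1 \<Longrightarrow> step_size (Suc t) \<le> step_size t"
  using vhat_mono[of t "Suc t"] vhat_pos[of t] eta_pos
  unfolding step_size_eq[of t] step_size_eq[of "Suc t", simplified]
  by (auto intro!: divide_left_mono real_sqrt_le_mono mult_mono mult_pos_pos)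

lemma step_size_le:
  "t \<ge> 1 \<Longrightarrow> step_size t \<le> \<eta> * sqrt (real CARD('d)) / sqrt (vhat 1) * (1 / sqrt (real t))"
  using vhat_mono[of 1 t] vhat_1_pos eta_pos
  by (simp add: step_size_eq divide_left_mono real_sqrt_le_mono mult_mono)

lemma card_div_step_size:
  "t \<ge> 1 \<Longrightarrow> real CARD('d) / step_size t = sqrt (real CARD('d) * vhat t * real t) / \<eta>"
  using vhat_pos[of t] eta_pos
  by (simp add: step_size_eq real_sqrt_mult field_simps)

lemma regret_against_le:
  fixes f :: "nat \<Rightarrow> real^'d \<Rightarrow> real"
  assumes "bounded F" "z \<in> F" "T \<ge> 1"
    and f_convex: "\<And>t. t \<in> {1..T} \<Longrightarrow> convex_on F (f t)"
    and f_grad: "\<And>t x. t \<in> {1..T} \<Longrightarrow> x \<in> F \<Longrightarrow>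
                   (f t has_derivative (\<lambda>h. grad t x \<bullet> h)) (at x)"
  shows "(\<Sum>t=1..T. f t (\<theta> t)) - (\<Sum>t=1..T. f t z)
    \<le> real CARD('d) * (linf_diam F)\<^sup>2 / (2 * step_size T)
      + (\<Sum>t=1..T. step_size t * (norm (grad t (\<theta> t)))\<^sup>2 / 2)"
proof -
  have "f t (\<theta> t) - f t z \<le> grad t (\<theta> t) \<bullet> (\<theta> t - z)" if "t \<in> {1..T}" for t
    using convex_on_gradient_inequality[OF f_convex[OF that] theta_in_F[of t] \<open>z \<in> F\<close>
        f_grad[OF that theta_in_F]]
    by (simp add: inner_diff_right)
  then have "(\<Sum>t=1..T. f t (\<theta> t)) - (\<Sum>t=1..T. f t z)
      \<le> (\<Sum>t=1..T. grad t (\<theta> t) \<bullet> (\<theta> t - z))"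
    unfolding sum_subtractf[symmetric] by (rule sum_mono)
  also have "\<dots> \<le> real CARD('d) * (linf_diam F)\<^sup>2 / (2 * step_size T)
      + (\<Sum>t=1..T. step_size t * (norm (grad t (\<theta> t)))\<^sup>2 / 2)"
  proof (rule projected_gradient_linearized_regret[OF convex_F closed_F \<open>z \<in> F\<close> \<open>T \<ge> 1\<close>])
    show "\<theta> (Suc t) = closest_point F (\<theta> t - step_size t *\<^sub>R grad t (\<theta> t))"
      if "t \<in> {1..T}" for t
      using theta_Suc[of t] that by (simp add: proj_set_eq_closest_point)
    show "step_size t > 0" if "t \<in> {1..T}" for t
      using step_size_pos that by simp
    show "step_size (Suc t) \<le> step_size t" if "t \<in> {1..<T}" for t
      using step_size_antimono that by simp
    show "(norm (\<theta> t - z))\<^sup>2 \<le> real CARD('d) * (linf_diam F)\<^sup>2" for t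
    proof -
      have "infnorm (\<theta> t - z) \<le> linf_diam F"
        using infnorm_diff_le_linf_diam[OF \<open>bounded F\<close> theta_in_F \<open>z \<in> F\<close>] .
      then have "(infnorm (\<theta> t - z))\<^sup>2 \<le> (linf_diam F)\<^sup>2"
        by (simp add: power_mono infnorm_pos_le)
      then show ?thesis
        using norm_power2_le_DIM_infnorm[of "\<theta> t - z"] by (simp add: order_trans mult_left_mono)
    qed
  qed
  finally show ?thesis .
qed

lemma sum_step_size_grad_le:
  assumes "T \<ge> 1"
    and grad_bound: "\<And>t x. t \<in> {1..T} \<Longrightarrow> x \<in> F \<Longrightarrow> infnorm (grad t x) \<le> G"
  shows "(\<Sum>t=1..T. step_size t * (norm (grad t (\<theta> t)))\<^sup>2 / 2)
    \<le> real CARD('d) powr (3/2) * G\<^sup>2 * \<eta> * (2 * sqrt (real T) - 1) / (2 * sqrt (vhat 1))"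
proof -
  define K where "K = \<eta> * sqrt (real CARD('d)) / sqrt (vhat 1) * (real CARD('d) * G\<^sup>2) / 2"
  have "step_size t * (norm (grad t (\<theta> t)))\<^sup>2 / 2 \<le> K * (1 / sqrt (real t))"
    if t: "t \<in> {1..T}" for t
  proof -
    have "(infnorm (grad t (\<theta> t)))\<^sup>2 \<le> G\<^sup>2"
      using grad_bound[OF t theta_in_F] by (simp add: power_mono infnorm_pos_le)
    then have "(norm (grad t (\<theta> t)))\<^sup>2 \<le> real CARD('d) * G\<^sup>2"
      using norm_power2_le_DIM_infnorm[of "grad t (\<theta> t)"] by (simp add: order_trans mult_left_mono)
    then have "step_size t * (norm (grad t (\<theta> t)))\<^sup>2
        \<le> \<eta> * sqrt (real CARD('d)) / sqrt (vhat 1) * (1 / sqrt (real t)) * (real CARD('d) * G\<^sup>2)"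
      using step_size_le[of t] step_size_pos[of t] t by (intro mult_mono) auto
    then show ?thesis by (simp add: K_def)
  qed
  then have "(\<Sum>t=1..T. step_size t * (norm (grad t (\<theta> t)))\<^sup>2 / 2)
      \<le> (\<Sum>t=1..T. K * (1 / sqrt (real t)))"
    by (rule sum_mono)
  also have "\<dots> = K * (\<Sum>t=1..T. 1 / sqrt (real t))"
    by (simp add: sum_distrib_left)
  also have "\<dots> \<le> K * (2 * sqrt (real T) - 1)"
    using sum_inverse_sqrt_le[OF \<open>T \<ge> 1\<close>] vhat_1_pos eta_pos
    by (intro mult_left_mono) (auto simp: K_def)
  also have "\<dots> = real CARD('d) powr (3/2) * G\<^sup>2 * \<eta> * (2 * sqrt (real T) - 1) / (2 * sqrt (vhat 1))"
  proof -
    have "real CARD('d) powr (3/2) = real CARD('d) * sqrt (real CARD('d))"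
      using powr_add[of "real CARD('d)" 1 "1/2"] by (simp add: powr_half_sqrt)
    then show ?thesis by (simp add: K_def mult_ac)
  qed
  finally show ?thesis .
qed

end

theorem theorem3p2:
  fixes F :: "(real^'d) set"
    and f :: "nat \<Rightarrow> real^'d \<Rightarrow> real"
    and grad :: "nat \<Rightarrow> real^'d \<Rightarrow> real^'d"
    and \<beta>2 \<eta> G :: real and th1 :: "real^'d" and T :: nat
  assumes conv: "convex F" and clo: "closed F" and bnd: "bounded F"
    and th1F: "th1 \<in> F"
    and fconv: "\<And>t. t \<in> {1..T} \<Longrightarrow> convex_on F (f t)"
    and fgrad: "\<And>t x. t \<in> {1..T} \<Longrightarrow> x \<in> F \<Longrightarrow>
                   (f t has_derivative (\<lambda>h. grad t x \<bullet> h)) (at x)"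
    and gbound: "\<And>t x. t \<in> {1..T} \<Longrightarrow> x \<in> F \<Longrightarrow> infnorm (grad t x) \<le> G"
    and beta: "0 \<le> \<beta>2" "\<beta>2 < 1"
    and eta: "\<eta> > 0"
    and T1: "T \<ge> 1"
    and v1: "ada_vhat F grad \<beta>2 \<eta> th1 1 > 0"
  shows "(\<Sum>t=1..T. f t (ada_theta F grad \<beta>2 \<eta> th1 t))
           - (INF th\<in>F. \<Sum>t=1..T. f t th)
         \<le> (linf_diam F)\<^sup>2 * sqrt (real CARD('d) * ada_vhat F grad \<beta>2 \<eta> th1 T * real T) / (2 * \<eta>)
           + real CARD('d) powr (3/2) * G\<^sup>2 * \<eta> * (2 * sqrt (real T) - 1)
             / (2 * sqrt (ada_vhat F grad \<beta>2 \<eta> th1 1))"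
proof -
  interpret adasgdmax F grad \<beta>2 \<eta> th1
    using conv clo th1F eta v1 by unfold_locales
  let ?bound = "(linf_diam F)\<^sup>2 * sqrt (real CARD('d) * vhat T * real T) / (2 * \<eta>)
    + real CARD('d) powr (3/2) * G\<^sup>2 * \<eta> * (2 * sqrt (real T) - 1) / (2 * sqrt (vhat 1))"
  have "real CARD('d) * (linf_diam F)\<^sup>2 / (2 * step_size T)
      = (linf_diam F)\<^sup>2 * (real CARD('d) / step_size T) / 2"
    by (simp add: mult_ac)
  also have "\<dots> = (linf_diam F)\<^sup>2 * sqrt (real CARD('d) * vhat T * real T) / (2 * \<eta>)"
    by (simp add: card_div_step_size[OF T1])
  finally have "(\<Sum>t=1..T. f t (\<theta> t)) - (\<Sum>t=1..T. f t z) \<le> ?bound" if "z \<in> F" for z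
    using regret_against_le[where f = f, OF bnd that T1 fconv fgrad]
      sum_step_size_grad_le[OF T1 gbound]
    by linarith
  then have "(\<Sum>t=1..T. f t (\<theta> t)) - ?bound \<le> (INF z\<in>F. \<Sum>t=1..T. f t z)"
    using th1F by (intro cINF_greatest) force+
  then show ?thesis by simp
qed

end
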